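(* Let $G$ be a graph of order $n\ge2$. The following are equivalent: (1) $G\cong K_{n-r}\sqcup rK_1$ for some $r$ with $n-r\ge2$; (2) $\operatorname{zir}(G)=n-1$; (3) $\operatorname{Z}(G)=n-1$; (4) $\overline{\operatorname{Z}}(G)=n-1$; (5) $\operatorname{ZIR}(G)=n-1$.
   Context: $\sqcup$ denotes disjoint union and $rK_1$ is $r$ isolated vertices. Zero forcing: a blue vertex $u$ changes a white vertex $w$ to blue if $w$ is the only white neighbor of $u$; $B$ is a zero forcing set if from blue set $B$ eventually all vertices are blue; $\operatorname{Z}(G)$ is the minimum size of a zero forcing set and $\overline{\operatorname{Z}}(G)$ the maximum size of an inclusion-minimal zero forcing set. A nonempty $F\subseteq V(G)$ is a fort if every $v\notin F$ has $|N(v)\cap F|\ne1$. A private fort of $x\in S$ relative to $S$ is a fort $F$ with $S\cap F=\{x\}$; $S$ is a ZIr-set if every element of $S$ has a private fort. $\operatorname{zir}(G)$ / $\operatorname{ZIR}(G)$ are the minimum / maximum cardinality of an inclusion-maximal ZIr-set. *)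

theory Defs
  imports Main
begin

definition graph :: "'a set \<Rightarrow> ('a \<Rightarrow> 'a \<Rightarrow> bool) \<Rightarrow> bool" where
  "graph V E \<longleftrightarrow> finite V \<and> (\<forall>u v. E u v \<longrightarrow> u \<in> V \<and> v \<in> V)
     \<and> (\<forall>u v. E u v \<longrightarrow> E v u) \<and> (\<forall>u. \<not> E u u)"

definition nbhd :: "('a \<Rightarrow> 'a \<Rightarrow> bool) \<Rightarrow> 'a \<Rightarrow> 'a set" where
  "nbhd E v = {u. E v u}"

definition graph_iso :: "'a set \<Rightarrow> ('a \<Rightarrow> 'a \<Rightarrow> bool) \<Rightarrow> 'b set \<Rightarrow> ('b \<Rightarrow> 'b \<Rightarrow> bool) \<Rightarrow> bool" where
  "graph_iso V E W F \<longleftrightarrow> (\<exists>f. bij_betw f V W \<and> (\<forall>u\<in>V. \<forall>v\<in>V. E u v \<longleftrightarrow> F (f u) (f v)))"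

text \<open>The graph K_{n-r} disjoint union r K_1 on vertex set {0..<n}: vertices below n-r form a clique,
  the remaining r vertices are isolated.\<close>
definition clique_plus_isolated_V :: "nat \<Rightarrow> nat set" where
  "clique_plus_isolated_V n = {0..<n}"

definition clique_plus_isolated_E :: "nat \<Rightarrow> nat \<Rightarrow> nat \<Rightarrow> nat \<Rightarrow> bool" where
  "clique_plus_isolated_E n r i j \<longleftrightarrow> i < n - r \<and> j < n - r \<and> i \<noteq> j"

definition force_step :: "'a set \<Rightarrow> ('a \<Rightarrow> 'a \<Rightarrow> bool) \<Rightarrow> 'a set \<Rightarrow> 'a set \<Rightarrow> bool" where
  "force_step V E S S' \<longleftrightarrow> (\<exists>u w. u \<in> S \<and> w \<in> V - S \<and> E u w
      \<and> (\<forall>x \<in> V - S. E u x \<longrightarrow> x = w) \<and> S' = insert w S)"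

definition zero_forcing_set :: "'a set \<Rightarrow> ('a \<Rightarrow> 'a \<Rightarrow> bool) \<Rightarrow> 'a set \<Rightarrow> bool" where
  "zero_forcing_set V E B \<longleftrightarrow> B \<subseteq> V \<and> (force_step V E)\<^sup>*\<^sup>* B V"

definition minimal_zero_forcing_set :: "'a set \<Rightarrow> ('a \<Rightarrow> 'a \<Rightarrow> bool) \<Rightarrow> 'a set \<Rightarrow> bool" where
  "minimal_zero_forcing_set V E B \<longleftrightarrow> zero_forcing_set V E B
     \<and> (\<forall>B'. B' \<subset> B \<longrightarrow> \<not> zero_forcing_set V E B')"

definition Z :: "'a set \<Rightarrow> ('a \<Rightarrow> 'a \<Rightarrow> bool) \<Rightarrow> nat" where
  "Z V E = Min (card ` {B. zero_forcing_set V E B})"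

definition Zbar :: "'a set \<Rightarrow> ('a \<Rightarrow> 'a \<Rightarrow> bool) \<Rightarrow> nat" where
  "Zbar V E = Max (card ` {B. minimal_zero_forcing_set V E B})"

definition fort :: "'a set \<Rightarrow> ('a \<Rightarrow> 'a \<Rightarrow> bool) \<Rightarrow> 'a set \<Rightarrow> bool" where
  "fort V E F \<longleftrightarrow> F \<noteq> {} \<and> F \<subseteq> V \<and> (\<forall>v \<in> V - F. card (nbhd E v \<inter> F) \<noteq> 1)"

definition private_fort :: "'a set \<Rightarrow> ('a \<Rightarrow> 'a \<Rightarrow> bool) \<Rightarrow> 'a set \<Rightarrow> 'a \<Rightarrow> 'a set \<Rightarrow> bool" where
  "private_fort V E S x F \<longleftrightarrow> fort V E F \<and> S \<inter> F = {x}"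

definition ZIr_set :: "'a set \<Rightarrow> ('a \<Rightarrow> 'a \<Rightarrow> bool) \<Rightarrow> 'a set \<Rightarrow> bool" where
  "ZIr_set V E S \<longleftrightarrow> S \<subseteq> V \<and> (\<forall>x \<in> S. \<exists>F. private_fort V E S x F)"

definition maximal_ZIr_set :: "'a set \<Rightarrow> ('a \<Rightarrow> 'a \<Rightarrow> bool) \<Rightarrow> 'a set \<Rightarrow> bool" where
  "maximal_ZIr_set V E S \<longleftrightarrow> ZIr_set V E S \<and> (\<forall>T. S \<subset> T \<longrightarrow> \<not> ZIr_set V E T)"

definition zir :: "'a set \<Rightarrow> ('a \<Rightarrow> 'a \<Rightarrow> bool) \<Rightarrow> nat" where
  "zir V E = Min (card ` {S. maximal_ZIr_set V E S})"

definition ZIR :: "'a set \<Rightarrow> ('a \<Rightarrow> 'a \<Rightarrow> bool) \<Rightarrow> nat" where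
  "ZIR V E = Max (card ` {S. maximal_ZIr_set V E S})"

end

theory Submission
  imports Defs
begin

text \<open>Call G a clique with isolated vertices if it has an edge and its non-isolated vertices
  are pairwise adjacent; up to isomorphism these are exactly the graphs \<open>K\<^sub>n\<^sub>-\<^sub>r \<squnion> rK\<^sub>1\<close>
  with \<open>n - r \<ge> 2\<close>.  In such a graph isolated vertices are never forced and a clique vertex
  can only force once all other clique vertices are blue, so every zero forcing set misses at
  most one vertex, while \<open>V - {c}\<close> for a clique vertex c is zero forcing.  Dually \<open>{x, c}\<close>
  for a clique vertex x and \<open>{x}\<close> for an isolated x are forts, so \<open>V - {c}\<close> is a ZIr-set,
  and no ZIr-set contains all clique vertices.  Hence all four parameters equal \<open>n - 1\<close>.

  Otherwise either G is edgeless, and all four parameters equal n, or some non-isolated w has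
  a non-twin x: a vertex v adjacent to exactly one of them forces it, after which the other is
  forced, so \<open>V - {w, x}\<close> is zero forcing.  Then \<open>Z \<le> n - 2\<close> and no minimal zero forcing
  set has size \<open>n - 1\<close>.  Finally a ZIr-set \<open>V - {c}\<close> needs private forts \<open>{x, c}\<close>, which make
  every non-isolated x a twin of c, and this again yields a clique with isolated vertices.\<close>

definition non_isolated :: "('a \<Rightarrow> 'a \<Rightarrow> bool) \<Rightarrow> 'a \<Rightarrow> bool" where
  "non_isolated E x \<longleftrightarrow> (\<exists>y. E x y)"

definition has_edge :: "('a \<Rightarrow> 'a \<Rightarrow> bool) \<Rightarrow> bool" where
  "has_edge E \<longleftrightarrow> (\<exists>x y. E x y)"

definition non_isolated_clique :: "('a \<Rightarrow> 'a \<Rightarrow> bool) \<Rightarrow> bool" where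
  "non_isolated_clique E \<longleftrightarrow>
     (\<forall>x y. non_isolated E x \<longrightarrow> non_isolated E y \<longrightarrow> x \<noteq> y \<longrightarrow> E x y)"

definition twins :: "('a \<Rightarrow> 'a \<Rightarrow> bool) \<Rightarrow> 'a \<Rightarrow> 'a \<Rightarrow> bool" where
  "twins E x y \<longleftrightarrow> (\<forall>v. v \<noteq> x \<longrightarrow> v \<noteq> y \<longrightarrow> (E x v \<longleftrightarrow> E y v))"

lemma graph_edgeD:
  assumes "graph V E" "E u v"
  shows "u \<in> V" "v \<in> V" "E v u" "u \<noteq> v"
  using assms unfolding graph_def by metis+

lemma graph_sym: "graph V E \<Longrightarrow> E u v \<longleftrightarrow> E v u"
  using graph_edgeD(3) by metis

lemma graph_finite: "graph V E \<Longrightarrow> finite V"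
  unfolding graph_def by simp

lemma non_isolated_in_vertices: "graph V E \<Longrightarrow> non_isolated E x \<Longrightarrow> x \<in> V"
  unfolding non_isolated_def using graph_edgeD(1) by metis

lemma non_isolated_if_edge: "graph V E \<Longrightarrow> E u v \<Longrightarrow> non_isolated E u \<and> non_isolated E v"
  unfolding non_isolated_def using graph_edgeD(3) by metis

lemma subset_card_minus_one_eq_Diff_singleton:
  assumes "finite V" "V \<noteq> {}" "S \<subseteq> V" "card S = card V - 1"
  shows "\<exists>c\<in>V. S = V - {c}"
proof -
  have "card V \<ge> 1" using assms(1,2) by (simp add: Suc_le_eq card_gt_0_iff)
  moreover have "card (V - S) = card V - card S"
    using assms(1,3) by (simp add: card_Diff_subset finite_subset)
  ultimately have "card (V - S) = 1" using assms(4) by linarith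
  then obtain c where "V - S = {c}" by (rule card_1_singletonE)
  then show ?thesis using assms(3) by blast
qed

subsection \<open>Clique with isolated vertices\<close>

lemma ex_bij_betw_initial_segment:
  assumes "finite V" "C \<subseteq> V"
  shows "\<exists>f. bij_betw f V {0..<card V} \<and> (\<forall>x\<in>V. f x < card C \<longleftrightarrow> x \<in> C)"
proof -
  obtain g where g: "bij_betw g C {0..<card C}"
    using ex_bij_betw_finite_nat[of C] finite_subset[OF assms(2,1)] by blast
  have "card (V - C) = card {card C..<card V}"
    using assms by (simp add: card_Diff_subset finite_subset)
  then obtain h where h: "bij_betw h (V - C) {card C..<card V}"
    using finite_same_card_bij assms(1) by blast
  define f where "f x = (if x \<in> C then g x else h x)" for x
  have "bij_betw f C {0..<card C}"
    using g by (rule bij_betw_cong[THEN iffD1, rotated]) (simp add: f_def)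
  moreover have "bij_betw f (V - C) {card C..<card V}"
    using h by (rule bij_betw_cong[THEN iffD1, rotated]) (simp add: f_def)
  ultimately have "bij_betw f (C \<union> (V - C)) ({0..<card C} \<union> {card C..<card V})"
    by (rule bij_betw_combine) auto
  moreover have "C \<union> (V - C) = V" "{0..<card C} \<union> {card C..<card V} = {0..<card V}"
    using assms card_mono[OF assms] by auto
  moreover have "f x < card C \<longleftrightarrow> x \<in> C" if "x \<in> V" for x
  proof (cases "x \<in> C")
    case True
    then show ?thesis using bij_betwE[OF g] by (simp add: f_def)
  next
    case False
    then have "h x \<in> {card C..<card V}" using bij_betwE[OF h] that by blast
    then show ?thesis using False by (simp add: f_def)
  qed
  ultimately show ?thesis by auto
qed

lemma graph_iso_clique_plus_isolated_imp_clique: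
  assumes g: "graph V E" and r: "n - r \<ge> 2"
    and "graph_iso V E (clique_plus_isolated_V n) (clique_plus_isolated_E n r)"
  shows "has_edge E \<and> non_isolated_clique E"
proof -
  obtain f where f: "bij_betw f V {0..<n}"
    and fE: "\<forall>u\<in>V. \<forall>v\<in>V. E u v \<longleftrightarrow> clique_plus_isolated_E n r (f u) (f v)"
    using assms(3) unfolding graph_iso_def clique_plus_isolated_V_def by blast
  have "0 \<in> f ` V" "1 \<in> f ` V" using f r unfolding bij_betw_def by auto
  then have "has_edge E"
    using fE r unfolding has_edge_def clique_plus_isolated_E_def by force
  moreover have "non_isolated_clique E"
    unfolding non_isolated_clique_def
  proof (intro allI impI)
    fix x y assume x: "non_isolated E x" and y: "non_isolated E y" and "x \<noteq> y"
    have small: "f u < n - r" if u: "non_isolated E u" for u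
    proof -
      obtain t where "E u t" using u unfolding non_isolated_def by blast
      then show ?thesis
        using fE graph_edgeD(1,2)[OF g] unfolding clique_plus_isolated_E_def by blast
    qed
    have "x \<in> V" "y \<in> V" using x y non_isolated_in_vertices[OF g] by auto
    moreover have "f x \<noteq> f y"
      using f \<open>x \<noteq> y\<close> calculation unfolding bij_betw_def inj_on_def by auto
    ultimately show "E x y"
      using fE small[OF x] small[OF y] unfolding clique_plus_isolated_E_def by auto
  qed
  ultimately show ?thesis ..
qed

lemma non_isolated_clique_graph_iso_clique_plus_isolated:
  assumes g: "graph V E" and n: "card V = n" and "has_edge E" and cl: "non_isolated_clique E"
  shows "\<exists>r. n - r \<ge> 2 \<and> graph_iso V E (clique_plus_isolated_V n) (clique_plus_isolated_E n r)"
proof -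
  define C where "C = {x. non_isolated E x}"
  have CV: "C \<subseteq> V" using non_isolated_in_vertices[OF g] unfolding C_def by auto
  obtain f where f: "bij_betw f V {0..<n}" and fC: "\<forall>x\<in>V. f x < card C \<longleftrightarrow> x \<in> C"
    using ex_bij_betw_initial_segment[OF graph_finite[OF g] CV] n by blast
  obtain a b where ab: "E a b" using \<open>has_edge E\<close> unfolding has_edge_def by auto
  then have "{a, b} \<subseteq> C" "a \<noteq> b"
    using non_isolated_if_edge[OF g ab] graph_edgeD(4)[OF g ab] unfolding C_def by auto
  then have "2 \<le> card C"
    using card_mono[OF finite_subset[OF CV graph_finite[OF g]], of "{a, b}"] by simp
  moreover have "card C \<le> n" using card_mono[OF graph_finite[OF g] CV] n by simp
  moreover have "E u v \<longleftrightarrow> clique_plus_isolated_E n (n - card C) (f u) (f v)"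
    if "u \<in> V" "v \<in> V" for u v
  proof -
    have "f u = f v \<longleftrightarrow> u = v" using f that unfolding bij_betw_def inj_on_def by auto
    moreover have "E u v \<longleftrightarrow> u \<in> C \<and> v \<in> C \<and> u \<noteq> v"
      using cl non_isolated_if_edge[OF g, of u v] graph_edgeD(4)[OF g, of u v]
      unfolding C_def non_isolated_clique_def by blast
    ultimately show ?thesis
      using fC that \<open>card C \<le> n\<close> unfolding clique_plus_isolated_E_def by auto
  qed
  ultimately show ?thesis
    using f unfolding graph_iso_def clique_plus_isolated_V_def
    by (intro exI[of _ "n - card C"]) auto
qed

subsection \<open>Zero forcing\<close>

lemma zero_forcing_set_vertices: "zero_forcing_set V E V"
  unfolding zero_forcing_set_def by simp

lemma zero_forcing_set_first_step:
  assumes "zero_forcing_set V E B" "B \<noteq> V"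
  shows "\<exists>B'. force_step V E B B'"
  using assms unfolding zero_forcing_set_def by (metis converse_rtranclpE)

lemma force_steps_preserve_isolated_white:
  assumes g: "graph V E" and x: "\<not> non_isolated E x"
  shows "(force_step V E)\<^sup>*\<^sup>* S T \<Longrightarrow> x \<notin> S \<Longrightarrow> x \<notin> T"
proof (induction rule: rtranclp_induct)
  case (step T T')
  from \<open>force_step V E T T'\<close> obtain u w where "E u w" "T' = insert w T"
    unfolding force_step_def by blast
  then show ?case using step non_isolated_if_edge[OF g \<open>E u w\<close>] x by auto
qed

lemma zero_forcing_set_contains_isolated:
  assumes "graph V E" "zero_forcing_set V E B" "x \<in> V" "\<not> non_isolated E x"
  shows "x \<in> B"
proof -
  have "(force_step V E)\<^sup>*\<^sup>* B V" using assms(2) unfolding zero_forcing_set_def ..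
  then show ?thesis using force_steps_preserve_isolated_white[OF assms(1,4)] assms(3) by blast
qed

lemma edgeless_zero_forcing_set_iff:
  assumes "graph V E" "\<not> has_edge E"
  shows "zero_forcing_set V E B \<longleftrightarrow> B = V"
proof
  assume "zero_forcing_set V E B"
  moreover have "\<not> non_isolated E x" for x
    using assms(2) unfolding has_edge_def non_isolated_def by blast
  ultimately show "B = V"
    using zero_forcing_set_contains_isolated[OF assms(1)] unfolding zero_forcing_set_def by blast
qed (simp add: zero_forcing_set_vertices)

lemma zero_forcing_set_Diff_singleton:
  assumes g: "graph V E" and "E u w"
  shows "zero_forcing_set V E (V - {w})"
proof -
  have "force_step V E (V - {w}) V"
    using graph_edgeD[OF assms] \<open>E u w\<close> unfolding force_step_def
    by (intro exI[of _ u] exI[of _ w]) auto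
  then show ?thesis unfolding zero_forcing_set_def by auto
qed

text \<open>u forces a and then the neighbour y of b forces b.\<close>

lemma zero_forcing_set_Diff_pair:
  assumes g: "graph V E" and ab: "a \<noteq> b" "b \<in> V"
    and u: "E u a" "\<not> E u b" "u \<noteq> b" and "E y b"
  shows "zero_forcing_set V E (V - {a, b})"
proof -
  have "u \<in> V" "a \<in> V" "u \<noteq> a" using graph_edgeD[OF g u(1)] by auto
  then have "force_step V E (V - {a, b}) (V - {b})"
    using ab u unfolding force_step_def by (intro exI[of _ u] exI[of _ a]) auto
  moreover have "zero_forcing_set V E (V - {b})"
    using zero_forcing_set_Diff_singleton[OF g \<open>E y b\<close>] .
  ultimately show ?thesis
    unfolding zero_forcing_set_def by (auto intro: converse_rtranclp_into_rtranclp)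
qed

lemma non_isolated_clique_zero_forcing_set_card_Diff:
  assumes g: "graph V E" and cl: "non_isolated_clique E" and B: "zero_forcing_set V E B"
  shows "card (V - B) \<le> 1"
proof (rule ccontr)
  assume "\<not> card (V - B) \<le> 1"
  then obtain a b where ab: "a \<in> V - B" "b \<in> V - B" "a \<noteq> b"
    using card_le_Suc0_iff_eq[of "V - B"] graph_finite[OF g] by auto
  then have "non_isolated E a" "non_isolated E b"
    using zero_forcing_set_contains_isolated[OF g B] by auto
  obtain u w where uw: "u \<in> B" "E u w" and unique: "\<forall>x \<in> V - B. E u x \<longrightarrow> x = w"
    using zero_forcing_set_first_step[OF B] ab unfolding force_step_def by blast
  have "E u a" "E u b"
    using cl \<open>non_isolated E a\<close> \<open>non_isolated E b\<close> non_isolated_if_edge[OF g uw(2)] ab uw(1)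
    unfolding non_isolated_clique_def by auto
  then show False using unique ab by blast
qed

subsection \<open>Twins\<close>

lemma non_isolated_clique_if_twins:
  assumes g: "graph V E" and "E w z" and twin: "\<And>x. non_isolated E x \<Longrightarrow> twins E x w"
  shows "non_isolated_clique E"
proof -
  have adjacent: "E x w" if x: "non_isolated E x" "x \<noteq> w" for x
  proof (rule ccontr)
    assume "\<not> E x w"
    have "E z w" "z \<noteq> w" "non_isolated E z"
      using graph_edgeD[OF g \<open>E w z\<close>] non_isolated_if_edge[OF g \<open>E w z\<close>] by auto
    then have "x \<noteq> z" using \<open>\<not> E x w\<close> by auto
    have "E x z" using twin[OF x(1)] \<open>E w z\<close> \<open>x \<noteq> z\<close> \<open>z \<noteq> w\<close> unfolding twins_def by auto
    moreover have "E z x \<longleftrightarrow> E w x"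
      using twin[OF \<open>non_isolated E z\<close>] \<open>x \<noteq> z\<close> x(2) unfolding twins_def by auto
    ultimately show False using \<open>\<not> E x w\<close> graph_edgeD(3)[OF g] by blast
  qed
  show ?thesis
    unfolding non_isolated_clique_def
  proof (intro allI impI)
    fix x y assume x: "non_isolated E x" and y: "non_isolated E y" and "x \<noteq> y"
    consider "x = w" | "y = w" | "x \<noteq> w" "y \<noteq> w" by blast
    then show "E x y"
    proof cases
      case 3
      then have "E x y \<longleftrightarrow> E w y" using twin[OF x] \<open>x \<noteq> y\<close> unfolding twins_def by auto
      then show ?thesis using adjacent[OF y 3(2)] graph_edgeD(3)[OF g] by blast
    qed (use adjacent x y \<open>x \<noteq> y\<close> graph_edgeD(3)[OF g] in blast)+
  qed
qed

lemma not_clique_zero_forcing_set_Diff_pair: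
  assumes g: "graph V E" and "\<not> non_isolated_clique E" and w: "non_isolated E w"
  shows "\<exists>x\<in>V. x \<noteq> w \<and> zero_forcing_set V E (V - {w, x})"
proof -
  obtain t where "E w t" using w unfolding non_isolated_def by blast
  then obtain x where x: "non_isolated E x" "\<not> twins E x w"
    using non_isolated_clique_if_twins[OF g] assms(2) by blast
  then obtain v where v: "v \<noteq> x" "v \<noteq> w" "\<not> (E x v \<longleftrightarrow> E w v)"
    unfolding twins_def by blast
  have "x \<noteq> w" using x(2) unfolding twins_def by blast
  have "x \<in> V" "w \<in> V" using non_isolated_in_vertices[OF g] x(1) w by auto
  obtain s where "E x s" using x(1) unfolding non_isolated_def by blast
  note sym = graph_sym[OF g]
  have "zero_forcing_set V E (V - {w, x})"
  proof (cases "E x v")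
    case True
    then have "zero_forcing_set V E (V - {x, w})"
      using zero_forcing_set_Diff_pair[OF g _ \<open>w \<in> V\<close>, of x v t] v \<open>x \<noteq> w\<close> \<open>E w t\<close> sym
      by auto
    then show ?thesis by (simp add: insert_commute)
  next
    case False
    then show ?thesis
      using zero_forcing_set_Diff_pair[OF g _ \<open>x \<in> V\<close>, of w v s] v \<open>x \<noteq> w\<close> \<open>E x s\<close> sym
      by auto
  qed
  then show ?thesis using \<open>x \<in> V\<close> \<open>x \<noteq> w\<close> by blast
qed

subsection \<open>Forts and ZIr-sets\<close>

lemma fort_singleton_iff:
  assumes g: "graph V E" and "x \<in> V"
  shows "fort V E {x} \<longleftrightarrow> \<not> non_isolated E x"
proof -
  have "card (nbhd E v \<inter> {x}) = 1 \<longleftrightarrow> E v x" for v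
    unfolding nbhd_def by (cases "E v x") auto
  then have "fort V E {x} \<longleftrightarrow> (\<forall>v\<in>V - {x}. \<not> E v x)"
    using assms(2) unfolding fort_def by simp
  also have "\<dots> \<longleftrightarrow> (\<forall>v. \<not> E x v)"
    using graph_edgeD(2,3,4)[OF g, of x] graph_edgeD(3)[OF g, of _ x] by blast
  finally show ?thesis unfolding non_isolated_def by simp
qed

lemma card_nbhd_Int_pair:
  assumes "x \<noteq> y"
  shows "card (nbhd E v \<inter> {x, y}) = 1 \<longleftrightarrow> \<not> (E v x \<longleftrightarrow> E v y)"
  using assms unfolding nbhd_def by (cases "E v x"; cases "E v y") auto

lemma fort_pair_iff_twins:
  assumes g: "graph V E" and "x \<in> V" "y \<in> V" "x \<noteq> y"
  shows "fort V E {x, y} \<longleftrightarrow> twins E x y"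
proof -
  have "fort V E {x, y} \<longleftrightarrow> (\<forall>v\<in>V - {x, y}. E v x \<longleftrightarrow> E v y)"
    using assms(2-4) card_nbhd_Int_pair[OF assms(4)] unfolding fort_def by auto
  also have "\<dots> \<longleftrightarrow> twins E x y"
    using graph_edgeD(2)[OF g, of x] graph_edgeD(2)[OF g, of y] unfolding twins_def
    by (auto simp: graph_sym[OF g])
  finally show ?thesis .
qed

lemma ZIr_set_Diff_singleton_twins:
  assumes g: "graph V E" and Z: "ZIr_set V E (V - {c})" and "c \<in> V"
    and x: "non_isolated E x" "x \<noteq> c"
  shows "twins E x c"
proof -
  have "x \<in> V" using non_isolated_in_vertices[OF g x(1)] .
  then obtain F where F: "fort V E F" "(V - {c}) \<inter> F = {x}"
    using Z x(2) unfolding ZIr_set_def private_fort_def by blast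
  then have "F \<subseteq> {x, c}" "x \<in> F" unfolding fort_def by auto
  moreover have "F \<noteq> {x}" using F(1) fort_singleton_iff[OF g \<open>x \<in> V\<close>] x(1) by blast
  ultimately have "F = {x, c}" by auto
  then show ?thesis using fort_pair_iff_twins[OF g \<open>x \<in> V\<close> \<open>c \<in> V\<close> x(2)] F(1) by simp
qed

lemma ZIr_set_Diff_singleton_imp_clique:
  assumes g: "graph V E" and "has_edge E" and "c \<in> V" and Z: "ZIr_set V E (V - {c})"
  shows "non_isolated_clique E"
proof (cases "non_isolated E c")
  case True
  then obtain z where "E c z" unfolding non_isolated_def by blast
  moreover have "twins E x c" if "non_isolated E x" for x
    using ZIr_set_Diff_singleton_twins[OF g Z \<open>c \<in> V\<close> that] unfolding twins_def
    by (cases "x = c") auto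
  ultimately show ?thesis using non_isolated_clique_if_twins[OF g] by blast
next
  case False
  obtain u v where "E u v" using \<open>has_edge E\<close> unfolding has_edge_def by blast
  moreover have "u \<noteq> c" "v \<noteq> c"
    using False non_isolated_if_edge[OF g \<open>E u v\<close>] by auto
  moreover have "twins E u c"
    using ZIr_set_Diff_singleton_twins[OF g Z \<open>c \<in> V\<close>] non_isolated_if_edge[OF g \<open>E u v\<close>]
      \<open>u \<noteq> c\<close> by blast
  ultimately have "E c v" using graph_edgeD(4)[OF g \<open>E u v\<close>] unfolding twins_def by auto
  then show ?thesis using False unfolding non_isolated_def by blast
qed

lemma non_isolated_clique_ZIr_set_Diff_singleton:
  assumes g: "graph V E" and cl: "non_isolated_clique E" and c: "non_isolated E c"
  shows "ZIr_set V E (V - {c})"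
  unfolding ZIr_set_def private_fort_def
proof (intro conjI ballI)
  fix x assume x: "x \<in> V - {c}"
  have "c \<in> V" using non_isolated_in_vertices[OF g c] .
  show "\<exists>F. fort V E F \<and> (V - {c}) \<inter> F = {x}"
  proof (cases "non_isolated E x")
    case True
    have "E x v \<longleftrightarrow> E c v" if "v \<noteq> x" "v \<noteq> c" for v
    proof (cases "non_isolated E v")
      case True
      then show ?thesis
        using cl c \<open>non_isolated E x\<close> that unfolding non_isolated_clique_def by blast
    next
      case False
      then show ?thesis
        using non_isolated_if_edge[OF g, of x v] non_isolated_if_edge[OF g, of c v] by blast
    qed
    then have "twins E x c" unfolding twins_def by blast
    then have "fort V E {x, c}" using fort_pair_iff_twins[OF g _ \<open>c \<in> V\<close>] x by blast
    then show ?thesis using x by blast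
  next
    case False
    then show ?thesis using fort_singleton_iff[OF g] x by blast
  qed
qed simp

lemma ZIr_set_misses_non_isolated:
  assumes g: "graph V E" and "E a b" and Z: "ZIr_set V E S"
  shows "\<exists>c. non_isolated E c \<and> c \<notin> S"
proof (rule ccontr)
  assume "\<not> ?thesis"
  then have all: "non_isolated E c \<Longrightarrow> c \<in> S" for c by blast
  have "a \<in> S" "b \<in> S" "a \<noteq> b"
    using all non_isolated_if_edge[OF g \<open>E a b\<close>] graph_edgeD(4)[OF g \<open>E a b\<close>] by auto
  then obtain F where F: "fort V E F" "S \<inter> F = {a}"
    using Z unfolding ZIr_set_def private_fort_def by blast
  have "nbhd E b \<inter> F = {a}"
    using F(2) all graph_edgeD(3)[OF g \<open>E a b\<close>] non_isolated_if_edge[OF g]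
    unfolding nbhd_def by blast
  then have "card (nbhd E b \<inter> F) = 1" by simp
  moreover have "b \<in> V - F" using F(2) \<open>b \<in> S\<close> \<open>a \<noteq> b\<close> graph_edgeD(2)[OF g \<open>E a b\<close>] by auto
  ultimately show False using F(1) unfolding fort_def by blast
qed

lemma edgeless_ZIr_set_iff:
  assumes g: "graph V E" and "\<not> has_edge E"
  shows "ZIr_set V E S \<longleftrightarrow> S \<subseteq> V"
proof
  assume "S \<subseteq> V"
  moreover have "fort V E {x}" if "x \<in> V" for x
    using fort_singleton_iff[OF g that] assms(2) unfolding has_edge_def non_isolated_def by blast
  ultimately show "ZIr_set V E S" unfolding ZIr_set_def private_fort_def by blast
qed (simp add: ZIr_set_def)

subsection \<open>The four parameters\<close>

lemma finite_Collect_subset_family: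
  assumes "finite V" "\<And>B. P B \<Longrightarrow> B \<subseteq> V"
  shows "finite {B. P B}"
proof -
  have "{B. P B} \<subseteq> {B. B \<subseteq> V}" using assms(2) by blast
  then show ?thesis using assms(1) by (simp add: finite_subset)
qed

lemma ex_minimal_zero_forcing_set:
  assumes g: "graph V E"
  shows "\<exists>B. minimal_zero_forcing_set V E B"
proof -
  have "finite {B. zero_forcing_set V E B}"
    by (rule finite_Collect_subset_family[OF graph_finite[OF g]]) (simp add: zero_forcing_set_def)
  from finite_has_minimal2[OF this, of V] obtain B where "zero_forcing_set V E B"
    and "\<forall>B'\<in>{B. zero_forcing_set V E B}. B' \<le> B \<longrightarrow> B = B'"
    by (auto simp: zero_forcing_set_vertices)
  then show ?thesis unfolding minimal_zero_forcing_set_def by auto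
qed

lemma ex_maximal_ZIr_set:
  assumes g: "graph V E"
  shows "\<exists>S. maximal_ZIr_set V E S"
proof -
  have "finite {S. ZIr_set V E S}"
    by (rule finite_Collect_subset_family[OF graph_finite[OF g]]) (simp add: ZIr_set_def)
  moreover have "ZIr_set V E {}" unfolding ZIr_set_def by simp
  ultimately obtain S where "ZIr_set V E S" and "\<forall>T\<in>{S. ZIr_set V E S}. S \<le> T \<longrightarrow> S = T"
    using finite_has_maximal2[of "{S. ZIr_set V E S}" "{}"] by auto
  then show ?thesis unfolding maximal_ZIr_set_def by auto
qed

lemma non_isolated_clique_maximal_ZIr_set_iff:
  assumes g: "graph V E" and "E a b" and cl: "non_isolated_clique E"
  shows "maximal_ZIr_set V E S \<longleftrightarrow> (\<exists>c. non_isolated E c \<and> S = V - {c})"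
proof
  assume S: "maximal_ZIr_set V E S"
  then obtain c where c: "non_isolated E c" "c \<notin> S"
    using ZIr_set_misses_non_isolated[OF g \<open>E a b\<close>] unfolding maximal_ZIr_set_def by blast
  then have "S \<subseteq> V - {c}" using S unfolding maximal_ZIr_set_def ZIr_set_def by blast
  moreover have "\<not> S \<subset> V - {c}"
    using S non_isolated_clique_ZIr_set_Diff_singleton[OF g cl c(1)]
    unfolding maximal_ZIr_set_def by blast
  ultimately show "\<exists>c. non_isolated E c \<and> S = V - {c}" using c by blast
next
  assume "\<exists>c. non_isolated E c \<and> S = V - {c}"
  then obtain c where c: "non_isolated E c" and S: "S = V - {c}" by blast
  have "\<not> ZIr_set V E T" if "V - {c} \<subset> T" for T
  proof
    assume T: "ZIr_set V E T"
    then have "T = V" using that non_isolated_in_vertices[OF g c] unfolding ZIr_set_def by blast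
    then show False
      using ZIr_set_misses_non_isolated[OF g \<open>E a b\<close> T] non_isolated_in_vertices[OF g] by blast
  qed
  then show "maximal_ZIr_set V E S"
    using non_isolated_clique_ZIr_set_Diff_singleton[OF g cl c] S
    unfolding maximal_ZIr_set_def by blast
qed

lemma non_isolated_clique_zero_forcing_set_card:
  assumes g: "graph V E" and cl: "non_isolated_clique E" and B: "zero_forcing_set V E B"
  shows "card V - 1 \<le> card B"
proof -
  have "B \<subseteq> V" using B unfolding zero_forcing_set_def by blast
  then have "card (V - B) = card V - card B"
    using graph_finite[OF g] by (simp add: card_Diff_subset finite_subset)
  then show ?thesis using non_isolated_clique_zero_forcing_set_card_Diff[OF g cl B] by simp
qed

lemma non_isolated_clique_card_minimal_zero_forcing_sets:
  assumes g: "graph V E" and "E a b" and cl: "non_isolated_clique E"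
  shows "card ` {B. minimal_zero_forcing_set V E B} = {card V - 1}"
proof -
  have "a \<in> V" using graph_edgeD(1)[OF g \<open>E a b\<close>] .
  have ZF_a: "zero_forcing_set V E (V - {a})"
    using zero_forcing_set_Diff_singleton[OF g graph_edgeD(3)[OF g \<open>E a b\<close>]] .
  have sub: "card ` {B. minimal_zero_forcing_set V E B} \<subseteq> {card V - 1}"
  proof
    fix k assume "k \<in> card ` {B. minimal_zero_forcing_set V E B}"
    then obtain B where B: "minimal_zero_forcing_set V E B" "k = card B" by blast
    have "B \<subseteq> V" using B(1) unfolding minimal_zero_forcing_set_def zero_forcing_set_def by blast
    moreover have "B \<noteq> V" using B(1) ZF_a \<open>a \<in> V\<close> unfolding minimal_zero_forcing_set_def by blast
    ultimately have "card B < card V" using psubset_card_mono[OF graph_finite[OF g]] by blast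
    moreover have "card V - 1 \<le> card B"
      using B(1) non_isolated_clique_zero_forcing_set_card[OF g cl]
      unfolding minimal_zero_forcing_set_def by blast
    ultimately show "k \<in> {card V - 1}" using B(2) by simp
  qed
  have "card B' < card V - 1" if "B' \<subset> V - {a}" for B'
    using psubset_card_mono[OF _ that] graph_finite[OF g] \<open>a \<in> V\<close> by simp
  then have "minimal_zero_forcing_set V E (V - {a})"
    unfolding minimal_zero_forcing_set_def
    using ZF_a non_isolated_clique_zero_forcing_set_card[OF g cl] leD by blast
  then show ?thesis
    using sub \<open>a \<in> V\<close> graph_finite[OF g] by (auto intro!: image_eqI[of _ card "V - {a}"])
qed

lemma non_isolated_clique_parameters:
  assumes g: "graph V E" and "E a b" and cl: "non_isolated_clique E"
  shows "zir V E = card V - 1 \<and> Z V E = card V - 1 \<and> Zbar V E = card V - 1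
    \<and> ZIR V E = card V - 1"
proof -
  have a: "non_isolated E a" "a \<in> V" "card (V - {a}) = card V - 1"
    using non_isolated_if_edge[OF g \<open>E a b\<close>] graph_edgeD(1)[OF g \<open>E a b\<close>] by auto
  have "card ` {S. maximal_ZIr_set V E S} = {card V - 1}"
    using non_isolated_clique_maximal_ZIr_set_iff[OF g \<open>E a b\<close> cl] a
      non_isolated_in_vertices[OF g] by (auto intro!: image_eqI[of _ card "V - {a}"])
  moreover have "Z V E = card V - 1"
    unfolding Z_def
  proof (rule Min_eqI)
    show "finite (card ` {B. zero_forcing_set V E B})"
      by (intro finite_imageI finite_Collect_subset_family[OF graph_finite[OF g]])
        (simp add: zero_forcing_set_def)
    show "card V - 1 \<in> card ` {B. zero_forcing_set V E B}"
      using zero_forcing_set_Diff_singleton[OF g graph_edgeD(3)[OF g \<open>E a b\<close>]] a(3)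
      by (auto intro!: image_eqI[of _ card "V - {a}"])
  qed (use non_isolated_clique_zero_forcing_set_card[OF g cl] in blast)
  ultimately show ?thesis
    using non_isolated_clique_card_minimal_zero_forcing_sets[OF g \<open>E a b\<close> cl]
    unfolding zir_def ZIR_def Zbar_def by simp
qed

lemma edgeless_parameters:
  assumes g: "graph V E" and "\<not> has_edge E"
  shows "zir V E = card V \<and> Z V E = card V \<and> Zbar V E = card V \<and> ZIR V E = card V"
proof -
  have ZF: "zero_forcing_set V E B \<longleftrightarrow> B = V" for B
    using edgeless_zero_forcing_set_iff[OF assms] .
  then have "{B. zero_forcing_set V E B} = {V}" by blast
  moreover have "{B. minimal_zero_forcing_set V E B} = {V}"
    unfolding minimal_zero_forcing_set_def ZF by blast
  moreover have "{S. maximal_ZIr_set V E S} = {V}"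
    unfolding maximal_ZIr_set_def edgeless_ZIr_set_iff[OF assms] by blast
  ultimately show ?thesis unfolding Z_def Zbar_def zir_def ZIR_def by simp
qed

lemma not_clique_minimal_zero_forcing_set_card:
  assumes g: "graph V E" and nc: "\<not> non_isolated_clique E"
    and B: "minimal_zero_forcing_set V E B"
  shows "card B \<noteq> card V - 1"
proof
  assume card_B: "card B = card V - 1"
  have ZF: "zero_forcing_set V E B" and "B \<subseteq> V"
    using B unfolding minimal_zero_forcing_set_def zero_forcing_set_def by auto
  have "V \<noteq> {}"
    using nc non_isolated_in_vertices[OF g] unfolding non_isolated_clique_def by blast
  then obtain w where "w \<in> V" and B_eq: "B = V - {w}"
    using subset_card_minus_one_eq_Diff_singleton[OF graph_finite[OF g] _ \<open>B \<subseteq> V\<close> card_B]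
    by blast
  then obtain B' where "force_step V E B B'" using zero_forcing_set_first_step[OF ZF] by blast
  then obtain u where "E u w" unfolding force_step_def B_eq by auto
  then have "non_isolated E w" using non_isolated_if_edge[OF g] by blast
  then obtain x where "x \<in> V" "x \<noteq> w" "zero_forcing_set V E (V - {w, x})"
    using not_clique_zero_forcing_set_Diff_pair[OF g nc] by blast
  moreover have "V - {w, x} \<subset> B" using B_eq calculation by auto
  ultimately show False using B unfolding minimal_zero_forcing_set_def by blast
qed

lemma not_clique_ZIr_set_card:
  assumes g: "graph V E" and "has_edge E" and nc: "\<not> non_isolated_clique E"
    and S: "ZIr_set V E S"
  shows "card S \<noteq> card V - 1"
proof
  assume "card S = card V - 1"
  moreover have "V \<noteq> {}" using \<open>has_edge E\<close> graph_edgeD(1)[OF g] unfolding has_edge_def by blast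
  ultimately obtain c where "c \<in> V" "S = V - {c}"
    using subset_card_minus_one_eq_Diff_singleton[OF graph_finite[OF g]] S
    unfolding ZIr_set_def by blast
  then show False using ZIr_set_Diff_singleton_imp_clique[OF g \<open>has_edge E\<close>] S nc by blast
qed

lemma not_clique_Z_bound:
  assumes g: "graph V E" and "E a b" and nc: "\<not> non_isolated_clique E"
  shows "Z V E + 2 \<le> card V"
proof -
  have a: "non_isolated E a" "a \<in> V"
    using non_isolated_if_edge[OF g \<open>E a b\<close>] graph_edgeD(1)[OF g \<open>E a b\<close>] by auto
  obtain x where "x \<in> V" "x \<noteq> a" and ZF: "zero_forcing_set V E (V - {a, x})"
    using not_clique_zero_forcing_set_Diff_pair[OF g nc a(1)] by blast
  have "finite (card ` {B. zero_forcing_set V E B})"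
    by (intro finite_imageI finite_Collect_subset_family[OF graph_finite[OF g]])
      (simp add: zero_forcing_set_def)
  then have "Z V E \<le> card (V - {a, x})"
    unfolding Z_def using ZF by (intro Min_le) blast+
  moreover have "card {a, x} \<le> card V"
    using card_mono[OF graph_finite[OF g], of "{a, x}"] \<open>x \<in> V\<close> a(2) by simp
  then have "card (V - {a, x}) + 2 = card V"
    using \<open>x \<in> V\<close> \<open>x \<noteq> a\<close> a(2) graph_finite[OF g] by (simp add: card_Diff_subset)
  ultimately show ?thesis by linarith
qed

lemma not_clique_parameters:
  assumes g: "graph V E" and "E a b" and nc: "\<not> non_isolated_clique E"
  shows "zir V E \<noteq> card V - 1 \<and> Z V E \<noteq> card V - 1 \<and> Zbar V E \<noteq> card V - 1
    \<and> ZIR V E \<noteq> card V - 1"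
proof -
  have fin: "finite (card ` {B. P B})" if "\<And>B. P B \<Longrightarrow> B \<subseteq> V" for P
    using finite_imageI finite_Collect_subset_family[OF graph_finite[OF g] that] by blast
  have "has_edge E" using \<open>E a b\<close> unfolding has_edge_def by blast
  have "Z V E \<noteq> card V - 1" using not_clique_Z_bound[OF assms] by linarith
  moreover have "Zbar V E \<noteq> card V - 1"
  proof -
    have "finite (card ` {B. minimal_zero_forcing_set V E B})"
      by (rule fin) (simp add: minimal_zero_forcing_set_def zero_forcing_set_def)
    moreover have "card ` {B. minimal_zero_forcing_set V E B} \<noteq> {}"
      using ex_minimal_zero_forcing_set[OF g] by blast
    moreover have "card V - 1 \<notin> card ` {B. minimal_zero_forcing_set V E B}"
      using not_clique_minimal_zero_forcing_set_card[OF g nc]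
      by (metis (mono_tags, lifting) imageE mem_Collect_eq)
    ultimately show ?thesis unfolding Zbar_def using Max_in by metis
  qed
  moreover have "zir V E \<noteq> card V - 1 \<and> ZIR V E \<noteq> card V - 1"
  proof -
    have "finite (card ` {S. maximal_ZIr_set V E S})"
      by (rule fin) (simp add: maximal_ZIr_set_def ZIr_set_def)
    moreover have "card ` {S. maximal_ZIr_set V E S} \<noteq> {}"
      using ex_maximal_ZIr_set[OF g] by blast
    moreover have "card V - 1 \<notin> card ` {S. maximal_ZIr_set V E S}"
      using not_clique_ZIr_set_card[OF g \<open>has_edge E\<close> nc] unfolding maximal_ZIr_set_def
      by (metis (mono_tags, lifting) imageE mem_Collect_eq)
    ultimately show ?thesis unfolding zir_def ZIR_def using Min_in Max_in by metis
  qed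
  ultimately show ?thesis by blast
qed

theorem proposition5p2:
  fixes V :: "'a set" and E :: "'a \<Rightarrow> 'a \<Rightarrow> bool" and n :: nat
  assumes "graph V E" and "card V = n" and "n \<ge> 2"
  shows "((\<exists>r. n - r \<ge> 2 \<and> graph_iso V E (clique_plus_isolated_V n) (clique_plus_isolated_E n r))
            \<longleftrightarrow> zir V E = n - 1)
       \<and> ((\<exists>r. n - r \<ge> 2 \<and> graph_iso V E (clique_plus_isolated_V n) (clique_plus_isolated_E n r))
            \<longleftrightarrow> Z V E = n - 1)
       \<and> ((\<exists>r. n - r \<ge> 2 \<and> graph_iso V E (clique_plus_isolated_V n) (clique_plus_isolated_E n r))
            \<longleftrightarrow> Zbar V E = n - 1)
       \<and> ((\<exists>r. n - r \<ge> 2 \<and> graph_iso V E (clique_plus_isolated_V n) (clique_plus_isolated_E n r))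
            \<longleftrightarrow> ZIR V E = n - 1)"
proof -
  let ?Q = "has_edge E \<and> non_isolated_clique E"
  have iso: "(\<exists>r. n - r \<ge> 2 \<and> graph_iso V E (clique_plus_isolated_V n) (clique_plus_isolated_E n r))
    \<longleftrightarrow> ?Q"
    using graph_iso_clique_plus_isolated_imp_clique[OF assms(1)]
      non_isolated_clique_graph_iso_clique_plus_isolated[OF assms(1,2)] by blast
  have "(?Q \<longleftrightarrow> zir V E = n - 1) \<and> (?Q \<longleftrightarrow> Z V E = n - 1) \<and> (?Q \<longleftrightarrow> Zbar V E = n - 1)
    \<and> (?Q \<longleftrightarrow> ZIR V E = n - 1)"
  proof (cases "has_edge E")
    case False
    then show ?thesis using edgeless_parameters[OF assms(1)] assms(2,3) by simp
  next
    case True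
    then obtain a b where "E a b" unfolding has_edge_def by blast
    then show ?thesis
      using True non_isolated_clique_parameters[OF assms(1)] not_clique_parameters[OF assms(1)]
        assms(2) by (cases "non_isolated_clique E") auto
  qed
  then show ?thesis unfolding iso .
qed

end
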